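(* Let $n\ge 1$ and let $A_1,\dots,A_n$ be real orthogonal $n\times n$ matrices such that $A_1=\mathbb{1}_n$ (the identity) and $A_iA_j+A_jA_i=-2\delta_{i,j}\mathbb{1}_n$ for all $i,j\in\{2,\dots,n\}$. For $x,y\in\mathcal{S}^{n-1}$ define $\alpha_i(x,y)=(A_ix\,|\,y)$ and $$M(x,y)=\sum_{i=1}^n\alpha_i(x,y)A_i.$$ Then $M$ is a continuous map from $\mathcal{S}^{n-1}\times\mathcal{S}^{n-1}$ to the orthogonal group $O(n)$, and $M(x,y)\,x=y$ for all $x,y\in\mathcal{S}^{n-1}$.
   Context: $\mathcal{S}^{n-1}$ is the unit sphere of $\mathbb{R}^n$, $(\cdot|\cdot)$ is the standard Euclidean inner product on $\mathbb{R}^n$, and $\delta_{i,j}$ is the Kronecker delta. (Such families exist for $n=2,4,8$.) *)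

theory Defs
  imports "HOL-Analysis.Analysis"
begin

definition alpha :: "(nat \<Rightarrow> real^'n^'n) \<Rightarrow> nat \<Rightarrow> real^'n \<Rightarrow> real^'n \<Rightarrow> real" where
  "alpha A i x y = (A i *v x) \<bullet> y"

definition Mmap :: "(nat \<Rightarrow> real^'n^'n) \<Rightarrow> real^'n \<Rightarrow> real^'n \<Rightarrow> real^'n^'n" where
  "Mmap A x y = (\<Sum>i = 1..CARD('n). alpha A i x y *\<^sub>R A i)"

end

theory Submission
  imports Defs
begin

text \<open>
  Every unit vector \<open>x\<close> is sent by the matrices \<open>A\<^sub>i\<close> to an orthonormal basis
  \<open>A\<^sub>1x, \<dots>, A\<^sub>nx\<close>: for \<open>i \<noteq> j\<close> the cross term \<open>(A\<^sub>iv | A\<^sub>jv)\<close> is half of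
  \<open>(v | (A\<^sub>i\<^sup>TA\<^sub>j + A\<^sub>j\<^sup>TA\<^sub>i)v) = 0\<close>, because \<open>A\<^sub>i\<^sup>T = -A\<^sub>i\<close> for \<open>i \<ge> 2\<close>.
  Hence \<open>M(x,y)x = \<Sum>\<^sub>i (y | A\<^sub>ix) A\<^sub>ix = y\<close> is the expansion of \<open>y\<close> in that basis.
  The same orthogonality gives \<open>|M(x,y)v|\<^sup>2 = (\<Sum>\<^sub>i \<alpha>\<^sub>i\<^sup>2) |v|\<^sup>2\<close> for every \<open>v\<close>,
  and taking \<open>v = x\<close> shows \<open>\<Sum>\<^sub>i \<alpha>\<^sub>i\<^sup>2 = |y|\<^sup>2 = 1\<close>, so \<open>M(x,y)\<close> is an isometry.
\<close>

lemma matrix_vector_mult_sum_left: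
  fixes A :: "'i \<Rightarrow> real^'n^'m"
  shows "(\<Sum>i\<in>S. A i) *v v = (\<Sum>i\<in>S. A i *v v)"
  by (induction S rule: infinite_finite_induct) (simp_all add: matrix_vector_mult_add_rdistrib)

lemma inner_matrix_vector_mult:
  fixes P Q :: "real^'n^'n"
  shows "(P *v v) \<bullet> (Q *v v) = v \<bullet> ((transpose P ** Q) *v v)"
  by (metis dot_lmul_matrix matrix_vector_mul_assoc vector_transpose_matrix)

lemma matrix_mul_rneg: "(P::real^'n^'n) ** (- Q) = - (P ** Q)"
  by (simp add: matrix_matrix_mult_def vec_eq_iff sum_negf)

lemma matrix_mul_lneg: "(- P::real^'n^'n) ** Q = - (P ** Q)"
  by (simp add: matrix_matrix_mult_def vec_eq_iff sum_negf)

lemma orthogonal_matrix_transpose_eq_neg: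
  fixes P :: "real^'n^'n"
  assumes "orthogonal_matrix P" and "P ** P = - mat 1"
  shows "transpose P = - P"
proof -
  have "transpose P = - (transpose P ** (P ** P))"
    by (simp add: assms(2) matrix_mul_rneg)
  also have "\<dots> = - P"
    using assms(1) by (simp add: matrix_mul_assoc orthogonal_matrix)
  finally show ?thesis .
qed

lemma self_anticomm_imp_square_eq_neg:
  fixes P :: "real^'n^'n"
  assumes "P ** P + P ** P = (-2) *\<^sub>R mat 1"
  shows "P ** P = - mat 1"
proof -
  have "(2::real) *\<^sub>R (P ** P) = (2::real) *\<^sub>R (- mat 1)"
    using assms by (simp add: scaleR_2)
  then show ?thesis by (metis scaleR_cancel_left zero_neq_numeral)
qed

lemma clifford_family_transpose_anticomm:
  fixes A :: "nat \<Rightarrow> real^'n^'n"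
  assumes orth: "\<And>i. i \<in> {1..m} \<Longrightarrow> orthogonal_matrix (A i)"
    and A1: "A 1 = mat 1"
    and anti: "\<And>i j. i \<in> {2..m} \<Longrightarrow> j \<in> {2..m} \<Longrightarrow>
               A i ** A j + A j ** A i = (if i = j then -2 else 0) *\<^sub>R mat 1"
    and i: "i \<in> {1..m}" and j: "j \<in> {1..m}"
  shows "transpose (A i) ** A j + transpose (A j) ** A i = (if i = j then 2 else 0) *\<^sub>R mat 1"
proof -
  have skew: "transpose (A k) = - A k" if "k \<in> {2..m}" for k
    using orth[of k] anti[of k k] that
    by (intro orthogonal_matrix_transpose_eq_neg self_anticomm_imp_square_eq_neg) auto
  consider "i = j" | "i = 1" "j \<in> {2..m}" | "j = 1" "i \<in> {2..m}"
    | "i \<in> {2..m}" "j \<in> {2..m}" "i \<noteq> j"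
    using i j by fastforce
  then show ?thesis
  proof cases
    case 1
    then show ?thesis using orth[OF i] by (simp add: orthogonal_matrix scaleR_2)
  next
    case 2
    then show ?thesis by (simp only: A1 skew) simp
  next
    case 3
    then show ?thesis by (simp only: A1 skew) simp
  next
    case 4
    then show ?thesis using anti[of i j] by (simp add: skew matrix_mul_lneg add_eq_0_iff2)
  qed
qed

lemma clifford_family_inner:
  fixes A :: "nat \<Rightarrow> real^'n^'n"
  assumes "\<And>i. i \<in> {1..m} \<Longrightarrow> orthogonal_matrix (A i)"
    and "A 1 = mat 1"
    and "\<And>i j. i \<in> {2..m} \<Longrightarrow> j \<in> {2..m} \<Longrightarrow>
               A i ** A j + A j ** A i = (if i = j then -2 else 0) *\<^sub>R mat 1"
    and "i \<in> {1..m}" and "j \<in> {1..m}"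
  shows "(A i *v v) \<bullet> (A j *v v) = (if i = j then v \<bullet> v else 0)"
proof -
  have "2 * ((A i *v v) \<bullet> (A j *v v)) = (A i *v v) \<bullet> (A j *v v) + (A j *v v) \<bullet> (A i *v v)"
    by (simp add: inner_commute)
  also have "\<dots> = v \<bullet> ((transpose (A i) ** A j + transpose (A j) ** A i) *v v)"
    by (simp add: inner_matrix_vector_mult matrix_vector_mult_add_rdistrib inner_add_right)
  also have "\<dots> = 2 * (if i = j then v \<bullet> v else 0)"
    by (simp only: clifford_family_transpose_anticomm[OF assms] scaleR_matrix_vector_assoc[symmetric]
        matrix_vector_mul_lid) simp
  finally show ?thesis by simp
qed

lemma orthonormal_family_expand:
  fixes u :: "'i \<Rightarrow> 'a::euclidean_space"
  assumes "finite I" and card: "card I = DIM('a)"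
    and onorm: "\<And>i j. i \<in> I \<Longrightarrow> j \<in> I \<Longrightarrow> u i \<bullet> u j = (if i = j then 1 else 0)"
  shows "(\<Sum>i\<in>I. (y \<bullet> u i) *\<^sub>R u i) = y"
proof -
  have inj: "inj_on u I"
    by (rule inj_onI) (metis onorm zero_neq_one)
  have orth: "pairwise orthogonal (u ` I)"
    by (auto simp: pairwise_def orthogonal_def onorm)
  have unit: "norm b = 1" if "b \<in> u ` I" for b
    using that by (auto simp: norm_eq_1 onorm)
  have "0 \<notin> u ` I"
    using unit by force
  with orth have "independent (u ` I)"
    by (rule pairwise_orthogonal_independent)
  then have "UNIV \<subseteq> span (u ` I)"
    by (rule card_ge_dim_independent[rotated]) (simp_all add: card_image[OF inj] card)
  then have "(\<Sum>b\<in>u ` I. (y \<bullet> b) *\<^sub>R b) = y"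
    using orth unit \<open>finite I\<close> by (intro orthonormal_basis_expand) auto
  then show ?thesis by (simp add: sum.reindex[OF inj])
qed

lemma continuous_on_Mmap:
  fixes A :: "nat \<Rightarrow> real^'n^'n"
  shows "continuous_on S (\<lambda>(x, y). Mmap A x y)"
proof -
  have "continuous_on UNIV (\<lambda>p::(real^'n) \<times> (real^'n). Mmap A (fst p) (snd p))"
    unfolding Mmap_def alpha_def
    by (intro continuous_intros linear_continuous_on
        bounded_linear_compose[OF matrix_vector_mul_bounded_linear bounded_linear_fst])
  then show ?thesis
    by (rule continuous_on_subset[THEN continuous_on_eq]) (auto simp: case_prod_beta)
qed

lemma Mmap_apply: "Mmap A x y *v v = (\<Sum>i = 1..CARD('n). alpha A i x y *\<^sub>R (A i *v v))"
  for A :: "nat \<Rightarrow> real^'n^'n"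
  by (simp add: Mmap_def matrix_vector_mult_sum_left scaleR_matrix_vector_assoc)

context
  fixes A :: "nat \<Rightarrow> real^'n^'n"
  assumes isometric: "\<And>i j v. i \<in> {1..CARD('n)} \<Longrightarrow> j \<in> {1..CARD('n)} \<Longrightarrow>
                        (A i *v v) \<bullet> (A j *v v) = (if i = j then v \<bullet> v else 0)"
begin

lemma norm_sum_isometric_family:
  "(norm (\<Sum>i = 1..CARD('n). c i *\<^sub>R (A i *v v)))\<^sup>2 = (\<Sum>i = 1..CARD('n). (c i)\<^sup>2) * (norm v)\<^sup>2"
proof -
  have "pairwise (\<lambda>i j. orthogonal (c i *\<^sub>R (A i *v v)) (c j *\<^sub>R (A j *v v))) {1..CARD('n)}"
    by (auto simp: pairwise_def orthogonal_def isometric)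
  then have "(norm (\<Sum>i = 1..CARD('n). c i *\<^sub>R (A i *v v)))\<^sup>2
           = (\<Sum>i = 1..CARD('n). (norm (c i *\<^sub>R (A i *v v)))\<^sup>2)"
    by (simp add: norm_sum_Pythagorean)
  also have "\<dots> = (\<Sum>i = 1..CARD('n). (c i)\<^sup>2 * (norm v)\<^sup>2)"
    by (intro sum.cong refl) (simp add: power_mult_distrib power2_norm_eq_inner isometric)
  finally show ?thesis by (simp add: sum_distrib_right)
qed

lemma Mmap_apply_self:
  assumes "norm x = 1"
  shows "Mmap A x y *v x = y"
proof -
  have "(\<Sum>i = 1..CARD('n). (y \<bullet> (A i *v x)) *\<^sub>R (A i *v x)) = y"
    using assms by (intro orthonormal_family_expand) (simp_all add: isometric dot_square_norm)
  then show ?thesis by (simp add: Mmap_apply alpha_def inner_commute)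
qed

lemma norm_Mmap_apply:
  assumes "norm x = 1"
  shows "norm (Mmap A x y *v v) = norm y * norm v"
proof -
  have "(norm y)\<^sup>2 = (norm (Mmap A x y *v x))\<^sup>2"
    by (simp add: Mmap_apply_self assms)
  also have "\<dots> = (\<Sum>i = 1..CARD('n). (alpha A i x y)\<^sup>2)"
    using norm_sum_isometric_family[of "\<lambda>i. alpha A i x y" x] assms by (simp add: Mmap_apply)
  finally have "(norm (Mmap A x y *v v))\<^sup>2 = (norm y * norm v)\<^sup>2"
    using norm_sum_isometric_family[of "\<lambda>i. alpha A i x y" v]
    by (simp add: Mmap_apply power_mult_distrib)
  then show ?thesis by (simp add: power2_eq_iff_nonneg)
qed

lemma orthogonal_matrix_Mmap:
  assumes "norm x = 1" and "norm y = 1"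
  shows "orthogonal_matrix (Mmap A x y)"
  using orthogonal_transformation_matrix[of "(*v) (Mmap A x y)"]
  by (simp add: orthogonal_transformation norm_Mmap_apply assms)

end

theorem lemma2:
  fixes A :: "nat \<Rightarrow> real^'n^'n"
  assumes orth: "\<And>i. i \<in> {1..CARD('n)} \<Longrightarrow> orthogonal_matrix (A i)"
    and A1: "A 1 = mat 1"
    and anti: "\<And>i j. i \<in> {2..CARD('n)} \<Longrightarrow> j \<in> {2..CARD('n)} \<Longrightarrow>
               A i ** A j + A j ** A i = (if i = j then -2 else 0) *\<^sub>R mat 1"
  shows "continuous_on (sphere 0 1 \<times> sphere 0 1) (\<lambda>(x, y). Mmap A x y)
       \<and> (\<forall>x \<in> sphere 0 1. \<forall>y \<in> sphere 0 1.
            orthogonal_matrix (Mmap A x y) \<and> Mmap A x y *v x = y)"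
proof -
  have isometric: "(A i *v v) \<bullet> (A j *v v) = (if i = j then v \<bullet> v else 0)"
    if "i \<in> {1..CARD('n)}" "j \<in> {1..CARD('n)}" for i j v
    using clifford_family_inner[OF orth A1 anti that] .
  show ?thesis
    using continuous_on_Mmap orthogonal_matrix_Mmap[OF isometric] Mmap_apply_self[OF isometric]
    by simp
qed

end
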